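(* For every $r\ge 0$ and every graph $G$, the comma category $\widetilde{i}/G$ of the pointer dropping functor $\widetilde{i}:\mathbf{D}^r_{\Sigma,\Delta,\pi}\to\mathbf{G}_{\Sigma,\Delta,\pi}$ over $G$ is non-empty and connected.
   Context: Fix an uncountably infinite set $\mathcal{V}$, sets $\Sigma,\Delta$, finite $\pi$. Graphs: countable $V(G)\subset\mathcal{V}$, a set $E(G)$ of pairwise disjoint two-element subsets of $V(G)\times\pi$, partial labelings $\sigma(G):V(G)\rightharpoonup\Sigma$, $\delta(G):E(G)\rightharpoonup\Delta$; $G\subseteq H$ is componentwise inclusion (partial functions as sets of pairs). Renamings are bijections of $\mathcal{V}$ acting naturally on graphs ($V(R(G))=R(V(G))$, edges $\{u\!:\!i,v\!:\!j\}\mapsto\{R(u)\!:\!i,R(v)\!:\!j\}$, labelings precomposed with $R^{-1}$). Disk $G^r_c=(H,c)$: $V(H)$ the vertices at distance $\le r+1$ from $c$, $E(H)$ the edges of $G$ with an endpoint at distance $\le r$, $\sigma(H)=\sigma(G)$ restricted to distance $\le r$, $\delta(H)=\delta(G)|_{E(H)}$; $\mathcal{D}^r$ is the set of radius-$r$ disks. Category $\mathbf{G}_{\Sigma,\Delta,\pi}$: objects graphs, morphism $m:G\to H$ a renaming $|m|$ with $|m|(G)\subseteq H$, composition by composition of renamings. Category $\mathbf{D}^r_{\Sigma,\Delta,\pi}$: objects are the pairs $(H,\{c\})$ with $(H,c)\in\mathcal{D}^r$, together with $(\varnothing,\emptyset)$ ($\varnothing$ the empty graph); a morphism $m:(H_1,C_1)\to(H_2,C_2)$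 is a morphism $m:H_1\to H_2$ of $\mathbf{G}_{\Sigma,\Delta,\pi}$ with $|m|(C_1)\subseteq C_2$; composition and identities as in $\mathbf{G}_{\Sigma,\Delta,\pi}$. The functor $\widetilde{i}$ sends $(H,C)\mapsto H$ and $m\mapsto m$. The comma category $\widetilde{i}/G$ has objects pairs $((H,C),m:H\to G)$ and morphisms $((H_1,C_1),m\circ n)\to((H_2,C_2),m)$ given by morphisms $n:(H_1,C_1)\to(H_2,C_2)$ of $\mathbf{D}^r_{\Sigma,\Delta,\pi}$. Connected means any two objects are joined by a finite zigzag of morphisms. *)

theory Defs
  imports Main "HOL-Library.Countable_Set"
begin

section \<open>Graphs over vertex universe 'v, ports 'p, vertex labels 's, edge labels 'd\<close>

record ('v, 'p, 's, 'd) graph =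
  verts :: "'v set"
  edges :: "('v \<times> 'p) set set"
  vlab  :: "'v \<rightharpoonup> 's"
  elab  :: "('v \<times> 'p) set \<rightharpoonup> 'd"

definition wf_graph :: "('v, 'p, 's, 'd) graph \<Rightarrow> bool" where
  "wf_graph G \<longleftrightarrow>
     countable (verts G) \<and>
     (\<forall>e \<in> edges G. e \<subseteq> verts G \<times> UNIV \<and> card e = 2) \<and>
     (\<forall>e1 \<in> edges G. \<forall>e2 \<in> edges G. e1 \<noteq> e2 \<longrightarrow> e1 \<inter> e2 = {}) \<and>
     dom (vlab G) \<subseteq> verts G \<and>
     dom (elab G) \<subseteq> edges G"

definition empty_graph :: "('v, 'p, 's, 'd) graph" where
  "empty_graph = \<lparr>verts = {}, edges = {}, vlab = Map.empty, elab = Map.empty\<rparr>"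

definition subgraph :: "('v, 'p, 's, 'd) graph \<Rightarrow> ('v, 'p, 's, 'd) graph \<Rightarrow> bool" where
  "subgraph G H \<longleftrightarrow> verts G \<subseteq> verts H \<and> edges G \<subseteq> edges H \<and>
     vlab G \<subseteq>\<^sub>m vlab H \<and> elab G \<subseteq>\<^sub>m elab H"

text \<open>Action of a renaming (a bijection of the vertex universe) on graphs.\<close>
definition rename :: "('v \<Rightarrow> 'v) \<Rightarrow> ('v, 'p, 's, 'd) graph \<Rightarrow> ('v, 'p, 's, 'd) graph" where
  "rename R G =
     \<lparr>verts = R ` verts G,
      edges = (\<lambda>e. (\<lambda>(u, i). (R u, i)) ` e) ` edges G,
      vlab = (\<lambda>v. vlab G (inv R v)),
      elab = (\<lambda>e. elab G ((\<lambda>(u, i). (inv R u, i)) ` e))\<rparr>"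

definition gmor :: "('v \<Rightarrow> 'v) \<Rightarrow> ('v, 'p, 's, 'd) graph \<Rightarrow> ('v, 'p, 's, 'd) graph \<Rightarrow> bool" where
  "gmor m H G \<longleftrightarrow> bij m \<and> subgraph (rename m H) G"

definition adjacent :: "('v, 'p, 's, 'd) graph \<Rightarrow> 'v \<Rightarrow> 'v \<Rightarrow> bool" where
  "adjacent G u v \<longleftrightarrow> (\<exists>e \<in> edges G. \<exists>i j. e = {(u, i), (v, j)})"

text \<open>dist_le G c n v: the distance from c to v in G is at most n
  (there is a walk with at most n steps).\<close>
definition dist_le :: "('v, 'p, 's, 'd) graph \<Rightarrow> 'v \<Rightarrow> nat \<Rightarrow> 'v \<Rightarrow> bool" where
  "dist_le G c n v \<longleftrightarrow>
     (\<exists>ws. ws \<noteq> [] \<and> hd ws = c \<and> last ws = v \<and> length ws \<le> Suc n \<and>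
        set ws \<subseteq> verts G \<and>
        (\<forall>k. Suc k < length ws \<longrightarrow> adjacent G (ws ! k) (ws ! Suc k)))"

definition disk :: "('v, 'p, 's, 'd) graph \<Rightarrow> nat \<Rightarrow> 'v \<Rightarrow> ('v, 'p, 's, 'd) graph" where
  "disk G r c =
     \<lparr>verts = {v. dist_le G c (Suc r) v},
      edges = {e \<in> edges G. \<exists>u i. (u, i) \<in> e \<and> dist_le G c r u},
      vlab = vlab G |` {v. dist_le G c r v},
      elab = elab G |` {e \<in> edges G. \<exists>u i. (u, i) \<in> e \<and> dist_le G c r u}\<rparr>"

definition disks :: "nat \<Rightarrow> (('v, 'p, 's, 'd) graph \<times> 'v) set" where
  "disks r = {(disk G r c, c) | G c. wf_graph G \<and> c \<in> verts G}"

definition dobj :: "nat \<Rightarrow> (('v, 'p, 's, 'd) graph \<times> 'v set) set" where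
  "dobj r = {(H, {c}) | H c. (H, c) \<in> disks r} \<union> {(empty_graph, {})}"

definition dmor :: "('v \<Rightarrow> 'v) \<Rightarrow> (('v, 'p, 's, 'd) graph \<times> 'v set)
                     \<Rightarrow> (('v, 'p, 's, 'd) graph \<times> 'v set) \<Rightarrow> bool" where
  "dmor n X Y \<longleftrightarrow> gmor n (fst X) (fst Y) \<and> n ` snd X \<subseteq> snd Y"

definition comma_obj :: "nat \<Rightarrow> ('v, 'p, 's, 'd) graph
                         \<Rightarrow> ((('v, 'p, 's, 'd) graph \<times> 'v set) \<times> ('v \<Rightarrow> 'v)) set" where
  "comma_obj r G = {(X, m). X \<in> dobj r \<and> gmor m (fst X) G}"

definition comma_arr :: "nat \<Rightarrow> ('v, 'p, 's, 'd) graph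
     \<Rightarrow> (('v, 'p, 's, 'd) graph \<times> 'v set) \<times> ('v \<Rightarrow> 'v)
     \<Rightarrow> (('v, 'p, 's, 'd) graph \<times> 'v set) \<times> ('v \<Rightarrow> 'v) \<Rightarrow> bool" where
  "comma_arr r G A B \<longleftrightarrow> A \<in> comma_obj r G \<and> B \<in> comma_obj r G \<and>
     (\<exists>n. dmor n (fst A) (fst B) \<and> snd A = snd B \<circ> n)"

definition comma_connected :: "nat \<Rightarrow> ('v, 'p, 's, 'd) graph \<Rightarrow> bool" where
  "comma_connected r G \<longleftrightarrow>
     (\<forall>A \<in> comma_obj r G. \<forall>B \<in> comma_obj r G.
        (\<lambda>X Y. comma_arr r G X Y \<or> comma_arr r G Y X)\<^sup>*\<^sup>* A B)"

end

theory Submission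
  imports Defs
begin

(* The empty disk (\<emptyset>, \<emptyset>) is initial in D^r: every bijection is a morphism out of it.
   Hence every object ((H, C), m) of i/G receives the arrow id from ((\<emptyset>, \<emptyset>), m), which in
   turn maps to ((\<emptyset>, \<emptyset>), id) by m itself. So every object is joined to ((\<emptyset>, \<emptyset>), id) by a
   zigzag of length two. *)

lemma rename_empty_graph [simp]: "rename m empty_graph = empty_graph"
  by (simp add: rename_def empty_graph_def)

lemma gmor_empty_graph: "bij m \<Longrightarrow> gmor m empty_graph G"
  unfolding gmor_def rename_empty_graph by (simp add: subgraph_def empty_graph_def)

lemma comma_obj_empty_disk: "bij m \<Longrightarrow> ((empty_graph, {}), m) \<in> comma_obj r G"
  by (simp add: comma_obj_def dobj_def gmor_empty_graph)

lemma comma_obj_bij: "(X, m) \<in> comma_obj r G \<Longrightarrow> bij m"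
  by (simp add: comma_obj_def gmor_def)

lemma comma_arr_from_empty_disk:
  assumes "(X, m) \<in> comma_obj r G"
  shows "comma_arr r G ((empty_graph, {}), m) (X, m)"
  unfolding comma_arr_def
proof (intro conjI exI)
  show "((empty_graph, {}), m) \<in> comma_obj r G"
    using comma_obj_empty_disk comma_obj_bij assms by blast
  show "dmor id (fst ((empty_graph, {}), m)) (fst (X, m))"
    by (simp add: dmor_def gmor_empty_graph)
qed (use assms in simp_all)

lemma comma_arr_empty_disk_to_id:
  assumes "bij m"
  shows "comma_arr r G ((empty_graph, {}), m) ((empty_graph, {}), id)"
  unfolding comma_arr_def
proof (intro conjI exI)
  show "dmor m (fst ((empty_graph, {}), m)) (fst ((empty_graph, {}), id))"
    using assms by (simp add: dmor_def gmor_empty_graph)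
qed (simp_all add: assms comma_obj_empty_disk)

lemma comma_zigzag_to_empty_disk:
  assumes "A \<in> comma_obj r G"
  shows "(symclp (comma_arr r G))\<^sup>*\<^sup>* A ((empty_graph, {}), id)"
proof -
  obtain X m where A: "A = (X, m)" by fastforce
  have "symclp (comma_arr r G) A ((empty_graph, {}), m)"
    using comma_arr_from_empty_disk assms A by (blast intro: symclpI)
  moreover have "symclp (comma_arr r G) ((empty_graph, {}), m) ((empty_graph, {}), id)"
    using comma_arr_empty_disk_to_id comma_obj_bij assms A by (blast intro: symclpI)
  ultimately show ?thesis
    by (blast intro: rtranclp_trans r_into_rtranclp)
qed

lemma comma_connected_iff_symclp:
  "comma_connected r G \<longleftrightarrow>
     (\<forall>A \<in> comma_obj r G. \<forall>B \<in> comma_obj r G. (symclp (comma_arr r G))\<^sup>*\<^sup>* A B)"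
proof -
  have "symclp (comma_arr r G) = (\<lambda>X Y. comma_arr r G X Y \<or> comma_arr r G Y X)"
    by (simp add: symclp_def fun_eq_iff)
  then show ?thesis
    by (simp add: comma_connected_def)
qed

theorem proposition4p17:
  fixes r :: nat and G :: "('v, 'p :: finite, 's, 'd) graph"
  assumes "uncountable (UNIV :: 'v set)"
    and "wf_graph G"
  shows "comma_obj r G \<noteq> {} \<and> comma_connected r G"
proof
  show "comma_obj r G \<noteq> {}"
    using comma_obj_empty_disk[OF bij_id] by blast
  show "comma_connected r G"
    unfolding comma_connected_iff_symclp
    using comma_zigzag_to_empty_disk
    by (blast intro: rtranclp_trans rtranclp_symclp_sym)
qed

end
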